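(* Let $P$ be a (possibly infinite) positive causal logic program with $n$ rules ($n\le\omega$, with $n=\omega$ if $P$ is infinite). Then (i) the least fixpoint $\mathrm{lfp}(T_P)$ of the direct consequences operator exists and is the $\le$-least causal model of $P$, and (ii) $\mathrm{lfp}(T_P)=T_P\!\uparrow\!\omega=T_P\!\uparrow\! n$.
   Context: Causal graphs over a label set $Lb$: graphs $\langle V,E\rangle$, $V\subseteq Lb$, $E\subseteq V\times V$, reflexively and transitively closed; $G\le G'$ iff $G\supseteq G'$ (as vertex and edge sets). $G*G'=(G\cup G')^*$, $G\cdot G'=(G\odot G')^*$ where $G\odot G'$ has vertex set $V\cup V'$ and edge set $E\cup E'\cup\{(x,y)\mid x\in V,y\in V'\}$, and $^*$ is reflexive–transitive closure. Causal values are down-sets (ideals) of $\langle$causal graphs$,\le\rangle$, ordered by $\subseteq$; $U*U'=U\cap U'$, $U+U'=U\cup U'$, $U\cdot U'={\downarrow}\{G\cdot G'\mid G\in U,G'\in U'\}$; arbitrary sums are unions and arbitrary products intersections; $0=\emptyset$, $1$ = the set of all causal graphs; a label $l$ stands for the value ${\downarrow}G_l$ where $G_l$ has the single vertex $l$ and single edge $(l,l)$. A causal logic program over signature $\langle At,Lb\rangle$ is a set of rules $t: H\leftarrow B_1,\dots,B_n$ with $t\in Lb\cup\{1\}$, $H\in At$, $B_i$ literals ($p$ or $\mathit{not}\ p$); it is positive if no default negation occurs. A causal interpretation is a map $I:At\to$ causal values; $I\le J$ iff $I(p)\le J(p)$ for all $p$. $I$ is a causal model of positive $P$ iff for every rule,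 $(I(B_1)*\dots*I(B_n))\cdot t\le I(H)$ (empty product $=1$). $T_P(I)(p)=\sum\{(I(B_1)*\dots*I(B_n))\cdot t\mid (t:p\leftarrow B_1,\dots,B_n)\in P\}$. $T_P\!\uparrow\!0$ maps every atom to $0$, $T_P\!\uparrow\!(k+1)=T_P(T_P\!\uparrow\!k)$, and $T_P\!\uparrow\!\omega(p)=\sum_{k<\omega}T_P\!\uparrow\!k(p)$. *)

theory Defs
  imports Main
begin

text \<open>A graph over labels of type 'l: a pair (V, E). Lb = UNIV :: 'l set.\<close>
type_synonym 'l graph = "'l set \<times> ('l \<times> 'l) set"

definition is_cgraph :: "'l graph \<Rightarrow> bool" where
  "is_cgraph G \<longleftrightarrow> snd G \<subseteq> fst G \<times> fst G \<and> Id_on (fst G) \<subseteq> snd G \<and> trans (snd G)"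

definition cg_le :: "'l graph \<Rightarrow> 'l graph \<Rightarrow> bool" where
  "cg_le G G' \<longleftrightarrow> fst G' \<subseteq> fst G \<and> snd G' \<subseteq> snd G"

definition gclose :: "'l graph \<Rightarrow> 'l graph" where
  "gclose G = (fst G, Id_on (fst G) \<union> trancl (snd G))"

definition cg_prod :: "'l graph \<Rightarrow> 'l graph \<Rightarrow> 'l graph" where
  "cg_prod G G' = gclose (fst G \<union> fst G', snd G \<union> snd G')"

definition cg_app :: "'l graph \<Rightarrow> 'l graph \<Rightarrow> 'l graph" where
  "cg_app G G' = gclose (fst G \<union> fst G', snd G \<union> snd G' \<union> fst G \<times> fst G')"

type_synonym 'l cvalue = "'l graph set"

definition is_cvalue :: "'l cvalue \<Rightarrow> bool" where
  "is_cvalue U \<longleftrightarrow> (\<forall>G\<in>U. is_cgraph G) \<and>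
     (\<forall>G G'. G \<in> U \<longrightarrow> is_cgraph G' \<longrightarrow> cg_le G' G \<longrightarrow> G' \<in> U)"

definition down :: "'l graph set \<Rightarrow> 'l cvalue" where
  "down S = {G. is_cgraph G \<and> (\<exists>H\<in>S. cg_le G H)}"

definition cv_one :: "'l cvalue" where
  "cv_one = {G. is_cgraph G}"

definition cv_prod :: "'l cvalue \<Rightarrow> 'l cvalue \<Rightarrow> 'l cvalue" where
  "cv_prod U U' = U \<inter> U'"

definition cv_app :: "'l cvalue \<Rightarrow> 'l cvalue \<Rightarrow> 'l cvalue" where
  "cv_app U U' = down {cg_app G G' | G G'. G \<in> U \<and> G' \<in> U'}"

definition label_val :: "'l \<Rightarrow> 'l cvalue" where
  "label_val l = down {({l}, {(l, l)})}"

text \<open>Rule labels t \<in> Lb \<union> {1}: None stands for 1, Some l for label l.\<close>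
definition tval :: "'l option \<Rightarrow> 'l cvalue" where
  "tval t = (case t of None \<Rightarrow> cv_one | Some l \<Rightarrow> label_val l)"

datatype 'a literal = Pos 'a | Neg 'a

datatype ('a, 'l) crule = Rule (rlabel: "'l option") (rhead: 'a) (rbody: "'a literal list")

type_synonym ('a, 'l) cprogram = "('a, 'l) crule set"

definition positive :: "('a, 'l) cprogram \<Rightarrow> bool" where
  "positive P \<longleftrightarrow> (\<forall>r\<in>P. \<forall>b\<in>set (rbody r). \<exists>p. b = Pos p)"

type_synonym ('a, 'l) cinterp = "'a \<Rightarrow> 'l cvalue"

definition is_cinterp :: "('a, 'l) cinterp \<Rightarrow> bool" where
  "is_cinterp I \<longleftrightarrow> (\<forall>p. is_cvalue (I p))"

definition ci_le :: "('a, 'l) cinterp \<Rightarrow> ('a, 'l) cinterp \<Rightarrow> bool" where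
  "ci_le I J \<longleftrightarrow> (\<forall>p. I p \<subseteq> J p)"

text \<open>Value of a literal (negative literals do not occur in positive programs;
  for them we use the usual 1/0 reading).\<close>
fun lit_val :: "('a, 'l) cinterp \<Rightarrow> 'a literal \<Rightarrow> 'l cvalue" where
  "lit_val I (Pos p) = I p"
| "lit_val I (Neg p) = (if I p = {} then cv_one else {})"

definition body_val :: "('a, 'l) cinterp \<Rightarrow> 'a literal list \<Rightarrow> 'l cvalue" where
  "body_val I bs = foldr (\<lambda>b acc. cv_prod (lit_val I b) acc) bs cv_one"

definition causal_model :: "('a, 'l) cprogram \<Rightarrow> ('a, 'l) cinterp \<Rightarrow> bool" where
  "causal_model P I \<longleftrightarrow> is_cinterp I \<and>
     (\<forall>r\<in>P. cv_app (body_val I (rbody r)) (tval (rlabel r)) \<subseteq> I (rhead r))"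

definition TP :: "('a, 'l) cprogram \<Rightarrow> ('a, 'l) cinterp \<Rightarrow> ('a, 'l) cinterp" where
  "TP P I = (\<lambda>p. \<Union> {cv_app (body_val I (rbody r)) (tval (rlabel r)) | r. r \<in> P \<and> rhead r = p})"

definition TP_up :: "('a, 'l) cprogram \<Rightarrow> nat \<Rightarrow> ('a, 'l) cinterp" where
  "TP_up P k = (TP P ^^ k) (\<lambda>_. {})"

definition TP_omega :: "('a, 'l) cprogram \<Rightarrow> ('a, 'l) cinterp" where
  "TP_omega P = (\<lambda>p. \<Union>k. TP_up P k p)"

end

theory Submission
  imports Defs
begin

(* For a positive program P the operator TP P is monotone and
   finitary: a rule body is a finite conjunction of atoms, so a graph lying in
   the body value under the union of an increasing chain already lies in it at
   some finite stage.  Hence TP_omega P is a fixpoint, and it is below every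
   prefixed point (TP P J \<le> J); fixpoints and causal models are prefixed
   points, which gives part (i) and the first half of (ii).

   For finite P we bound the iteration by card P.  Values only shrink along a
   derivation (G \<le> G\<cdot>G'), so a derivation using some rule twice on one
   branch can be shortcut at the lower occurrence.  We formalise derivations
   without repeated rules as once_val S, defined by recursion on the set of
   still-available rules, show that once_val P is itself a prefixed point
   (the exchange lemma once_val_exchange is the shortcut argument), and
   observe that once_val P is reached by card P iterations of TP P. *)

definition rule_val :: "('a, 'l) cinterp \<Rightarrow> ('a, 'l) crule \<Rightarrow> 'l cvalue" where
  "rule_val I r = cv_app (body_val I (rbody r)) (tval (rlabel r))"

lemma TP_mem: "G \<in> TP P I p \<longleftrightarrow> (\<exists>r\<in>P. rhead r = p \<and> G \<in> rule_val I r)"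
  unfolding TP_def rule_val_def by blast

lemma mem_cv_app:
  "G \<in> cv_app U V \<longleftrightarrow> is_cgraph G \<and> (\<exists>B\<in>U. \<exists>B'\<in>V. cg_le G (cg_app B B'))"
  unfolding cv_app_def down_def by blast

lemma cg_le_trans: "cg_le G H \<Longrightarrow> cg_le H K \<Longrightarrow> cg_le G K"
  unfolding cg_le_def by blast

lemma cg_le_app: "cg_le (cg_app B B') B"
  unfolding cg_le_def cg_app_def gclose_def by auto

lemma is_cvalue_cv_app: "is_cvalue (cv_app U V)"
  unfolding is_cvalue_def by (auto simp: mem_cv_app intro: cg_le_trans)

lemma is_cvalue_Union: "(\<And>U. U \<in> F \<Longrightarrow> is_cvalue U) \<Longrightarrow> is_cvalue (\<Union>F)"
  unfolding is_cvalue_def by blast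

lemma is_cvalue_TP: "is_cvalue (TP P I p)"
  unfolding TP_def by (rule is_cvalue_Union) (auto intro: is_cvalue_cv_app)

lemma body_val_mem:
  "B \<in> body_val I bs \<longleftrightarrow> is_cgraph B \<and> (\<forall>b\<in>set bs. B \<in> lit_val I b)"
  by (induction bs) (auto simp: body_val_def cv_prod_def cv_one_def)

lemma positive_body_val:
  assumes "positive P" "r \<in> P"
  shows "B \<in> body_val I (rbody r) \<longleftrightarrow> is_cgraph B \<and> (\<forall>c. Pos c \<in> set (rbody r) \<longrightarrow> B \<in> I c)"
  using assms unfolding positive_def body_val_mem by (metis lit_val.simps(1))

lemma positive_subset: "positive P \<Longrightarrow> S \<subseteq> P \<Longrightarrow> positive S"
  unfolding positive_def by blast

lemma rule_val_mono:
  assumes "positive P" "r \<in> P" "\<And>c. I c \<subseteq> J c"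
  shows "rule_val I r \<subseteq> rule_val J r"
proof -
  have "body_val I (rbody r) \<subseteq> body_val J (rbody r)"
    using assms(3) unfolding subset_iff positive_body_val[OF assms(1,2)] by blast
  then show ?thesis unfolding rule_val_def subset_iff mem_cv_app by blast
qed

lemma rule_val_witness:
  assumes "positive P" "r \<in> P" "G \<in> rule_val I r"
  obtains B where "cg_le G B" "\<And>c. Pos c \<in> set (rbody r) \<Longrightarrow> B \<in> I c"
    "\<And>J. (\<And>c. Pos c \<in> set (rbody r) \<Longrightarrow> B \<in> J c) \<Longrightarrow> G \<in> rule_val J r"
proof -
  obtain B B' where B: "is_cgraph G" "is_cgraph B" "\<And>c. Pos c \<in> set (rbody r) \<Longrightarrow> B \<in> I c"
    "B' \<in> tval (rlabel r)" "cg_le G (cg_app B B')"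
    using assms(3) by (auto simp: rule_val_def mem_cv_app positive_body_val[OF assms(1,2)])
  show ?thesis
  proof
    show "cg_le G B" using cg_le_trans[OF B(5) cg_le_app] .
    show "G \<in> rule_val J r" if "\<And>c. Pos c \<in> set (rbody r) \<Longrightarrow> B \<in> J c" for J
      using B that by (auto simp: rule_val_def mem_cv_app positive_body_val[OF assms(1,2)])
  qed (use B in blast)
qed

section \<open>Monotonicity and continuity of the immediate consequence operator\<close>

lemma TP_mono:
  assumes "positive P" "\<And>c. I c \<subseteq> J c"
  shows "TP P I p \<subseteq> TP P J p"
proof -
  have "rule_val I r \<subseteq> rule_val J r" if "r \<in> P" for r
    using rule_val_mono[OF assms(1) that assms(2)] .
  then show ?thesis unfolding subset_iff TP_mem by blast
qed

lemma TP_up_Suc: "TP_up P (Suc k) = TP P (TP_up P k)"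
  by (simp add: TP_up_def)

lemma TP_up_0: "TP_up P 0 p = {}"
  by (simp add: TP_up_def)

lemma is_cvalue_TP_up: "is_cvalue (TP_up P k p)"
proof (cases k)
  case 0
  then show ?thesis by (simp add: TP_up_0 is_cvalue_def)
next
  case (Suc j)
  then show ?thesis by (simp add: TP_up_Suc is_cvalue_TP)
qed

lemma TP_up_mono:
  assumes "positive P" "k \<le> k'"
  shows "TP_up P k p \<subseteq> TP_up P k' p"
proof -
  have "TP_up P k q \<subseteq> TP_up P (Suc k) q" for k q
  proof (induction k arbitrary: q)
    case (Suc k)
    show ?case using TP_mono[OF assms(1) Suc.IH] by (simp only: TP_up_Suc)
  qed (simp add: TP_up_0)
  then show ?thesis by (rule lift_Suc_mono_le[of "\<lambda>k. TP_up P k p"]) (rule assms(2))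
qed

lemma chain_common_stage:
  fixes f :: "nat \<Rightarrow> 'c \<Rightarrow> 'd set"
  assumes chain: "\<And>k k' c. k \<le> k' \<Longrightarrow> f k c \<subseteq> f k' c"
    and "finite A" and "\<And>c. c \<in> A \<Longrightarrow> \<exists>k. x \<in> f k c"
  obtains K where "\<And>c. c \<in> A \<Longrightarrow> x \<in> f K c"
proof -
  obtain g where g: "\<And>c. c \<in> A \<Longrightarrow> x \<in> f (g c) c" using assms(3) by metis
  have "x \<in> f (Max (g ` A)) c" if "c \<in> A" for c
  proof -
    have "g c \<le> Max (g ` A)" using \<open>finite A\<close> that by simp
    then show ?thesis using chain g[OF that] by blast
  qed
  then show ?thesis using that by blast
qed

text \<open>TP_omega P is a fixpoint: a rule firing under the limit fires at a finite stage.\<close>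
lemma TP_omega_fixpoint:
  assumes "positive P"
  shows "TP P (TP_omega P) = TP_omega P"
proof (intro ext equalityI subsetI)
  fix p G
  assume "G \<in> TP P (TP_omega P) p"
  then obtain r where r: "r \<in> P" "rhead r = p" "G \<in> rule_val (TP_omega P) r"
    unfolding TP_mem by blast
  then obtain B where B: "\<And>c. Pos c \<in> set (rbody r) \<Longrightarrow> B \<in> TP_omega P c"
    and transfer: "\<And>J. (\<And>c. Pos c \<in> set (rbody r) \<Longrightarrow> B \<in> J c) \<Longrightarrow> G \<in> rule_val J r"
    using rule_val_witness[OF assms r(1,3)] by metis
  have atoms_finite: "finite {c. Pos c \<in> set (rbody r)}"
    using finite_vimageI[of "set (rbody r)" Pos] by (simp add: vimage_def inj_def)
  have "\<exists>k. B \<in> TP_up P k c" if "c \<in> {c. Pos c \<in> set (rbody r)}" for c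
    using B that unfolding TP_omega_def by blast
  then obtain K where "\<And>c. c \<in> {c. Pos c \<in> set (rbody r)} \<Longrightarrow> B \<in> TP_up P K c"
    using chain_common_stage[of "TP_up P", OF TP_up_mono[OF assms] atoms_finite] by metis
  then have "G \<in> TP_up P (Suc K) p" unfolding TP_up_Suc TP_mem using r transfer by blast
  then show "G \<in> TP_omega P p" unfolding TP_omega_def by blast
next
  fix p G
  assume "G \<in> TP_omega P p"
  then obtain k where k: "G \<in> TP_up P k p" unfolding TP_omega_def by blast
  then obtain j where j: "k = Suc j" by (cases k) (auto simp: TP_up_0)
  have "TP P (TP_up P j) p \<subseteq> TP P (TP_omega P) p"
    by (rule TP_mono[OF assms]) (auto simp: TP_omega_def)
  then show "G \<in> TP P (TP_omega P) p" using k unfolding j TP_up_Suc by blast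
qed

lemma TP_omega_least:
  assumes "positive P" "\<And>p. TP P J p \<subseteq> J p"
  shows "ci_le (TP_omega P) J"
proof -
  have "TP_up P k p \<subseteq> J p" for k p
  proof (induction k arbitrary: p)
    case (Suc k)
    then show ?case unfolding TP_up_Suc using TP_mono[OF assms(1)] assms(2) by blast
  qed (simp add: TP_up_0)
  then show ?thesis unfolding ci_le_def TP_omega_def by blast
qed

lemma causal_model_iff_prefixed:
  "causal_model P J \<longleftrightarrow> is_cinterp J \<and> (\<forall>p. TP P J p \<subseteq> J p)"
  unfolding causal_model_def subset_iff TP_mem rule_val_def by blast

section \<open>Derivations using each rule at most once per branch\<close>

text \<open>once_up n S: graphs derivable in n rounds from the rules in S, where a rule
  used at a node is no longer available in the subderivations below it.\<close>
fun once_up :: "nat \<Rightarrow> ('a, 'l) cprogram \<Rightarrow> ('a, 'l) cinterp" where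
  "once_up 0 S = (\<lambda>_. {})"
| "once_up (Suc n) S = (\<lambda>q. \<Union>{rule_val (once_up n (S - {r})) r | r. r \<in> S \<and> rhead r = q})"

text \<open>With card S rounds such derivations are never cut short.\<close>
definition once_val :: "('a, 'l) cprogram \<Rightarrow> ('a, 'l) cinterp" where
  "once_val S = once_up (card S) S"

lemma once_val_eq:
  assumes "finite S"
  shows "once_val S q = \<Union>{rule_val (once_val (S - {r})) r | r. r \<in> S \<and> rhead r = q}"
proof (cases "S = {}")
  case False
  then obtain m where m: "card S = Suc m" using assms by (metis card_gt_0_iff gr0_implies_Suc)
  then have "r \<in> S \<Longrightarrow> once_val (S - {r}) = once_up m (S - {r})" for r
    unfolding once_val_def using assms by simp
  then show ?thesis unfolding once_val_def m by auto
qed (simp add: once_val_def)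

lemma once_val_mem:
  assumes "finite S"
  shows "G \<in> once_val S q \<longleftrightarrow> (\<exists>r\<in>S. rhead r = q \<and> G \<in> rule_val (once_val (S - {r})) r)"
  unfolding once_val_eq[OF assms] by blast

lemma once_val_down_closed:
  assumes "finite S" "H \<in> once_val S q" "is_cgraph G" "cg_le G H"
  shows "G \<in> once_val S q"
proof -
  have "is_cvalue (once_val S q)"
    unfolding once_val_eq[OF assms(1)]
    by (rule is_cvalue_Union) (auto simp: rule_val_def intro: is_cvalue_cv_app)
  then show ?thesis using assms(2-4) unfolding is_cvalue_def by blast
qed

lemma once_up_below_TP_up:
  assumes "positive P" "S \<subseteq> P"
  shows "once_up n S q \<subseteq> TP_up P n q"
  using assms(2)
proof (induction n arbitrary: S q)
  case (Suc n)
  show ?case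
  proof
    fix G assume "G \<in> once_up (Suc n) S q"
    then obtain r where r: "r \<in> S" "rhead r = q" "G \<in> rule_val (once_up n (S - {r})) r"
      by auto
    have "r \<in> P" using r(1) Suc.prems by blast
    have "rule_val (once_up n (S - {r})) r \<subseteq> rule_val (TP_up P n) r"
      by (rule rule_val_mono[OF assms(1) \<open>r \<in> P\<close>]) (use Suc in blast)
    then show "G \<in> TP_up P (Suc n) q" unfolding TP_up_Suc TP_mem using r \<open>r \<in> P\<close> by blast
  qed
qed simp

lemma once_val_mono:
  assumes "finite S" "positive S" "S' \<subseteq> S"
  shows "once_val S' q \<subseteq> once_val S q"
  using assms
proof (induction S arbitrary: S' q rule: finite_psubset_induct)
  case (psubset S)
  show ?case
  proof
    fix G assume "G \<in> once_val S' q"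
    then obtain r where r: "r \<in> S'" "rhead r = q" "G \<in> rule_val (once_val (S' - {r})) r"
      using once_val_mem[OF rev_finite_subset[OF psubset(1,4)]] by blast
    have "r \<in> S" using r(1) psubset(4) by blast
    have "once_val (S' - {r}) c \<subseteq> once_val (S - {r}) c" for c
    proof (rule psubset(2))
      show "S - {r} \<subset> S" using \<open>r \<in> S\<close> by blast
      show "positive (S - {r})" using positive_subset[OF psubset(3)] by blast
      show "S' - {r} \<subseteq> S - {r}" using psubset(4) by blast
    qed
    then have "G \<in> rule_val (once_val (S - {r})) r"
      using rule_val_mono[OF psubset(3) \<open>r \<in> S\<close>] r(3) by blast
    then show "G \<in> once_val S q" using once_val_mem[OF psubset(1)] \<open>r \<in> S\<close> r(2) by blast
  qed
qed

text \<open>Exchange lemma (shortcutting): a derivation from S either avoids rule r, or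
  its value is already derivable for the head of r, because values only shrink
  from a use of r towards the root.\<close>
lemma once_val_exchange:
  assumes "finite S" "positive S" "r \<in> S" "G \<in> once_val S b"
  shows "G \<in> once_val (S - {r}) b \<or> G \<in> once_val S (rhead r)"
  using assms
proof (induction S arbitrary: r b G rule: finite_psubset_induct)
  case (psubset S)
  obtain r' where r': "r' \<in> S" "rhead r' = b" "G \<in> rule_val (once_val (S - {r'})) r'"
    using psubset(5) once_val_mem[OF psubset(1)] by blast
  obtain B where B: "cg_le G B" "\<And>c. Pos c \<in> set (rbody r') \<Longrightarrow> B \<in> once_val (S - {r'}) c"
    and transfer: "\<And>J. (\<And>c. Pos c \<in> set (rbody r') \<Longrightarrow> B \<in> J c) \<Longrightarrow> G \<in> rule_val J r'"
    using rule_val_witness[OF psubset(3) r'(1,3)] by blast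
  have G_graph: "is_cgraph G"
    using r'(3) unfolding rule_val_def mem_cv_app by blast
  consider "r' = r" | "B \<in> once_val (S - {r'}) (rhead r)"
    | "r' \<noteq> r" "B \<notin> once_val (S - {r'}) (rhead r)" by blast
  then show ?case
  proof cases
    case 1
    then show ?thesis using psubset(5) r'(2) by blast
  next
    case 2
    then have "B \<in> once_val S (rhead r)"
      using once_val_mono[OF psubset(1,3), of "S - {r'}"] by blast
    then show ?thesis using once_val_down_closed[OF psubset(1) _ G_graph B(1)] by blast
  next
    case 3
    have pos: "positive (S - {r'})" using positive_subset[OF psubset(3)] by blast
    have smaller: "S - {r'} \<subset> S" using r'(1) by blast
    have r_left: "r \<in> S - {r'}" using 3 psubset(4) by blast
    have "B \<in> once_val (S - {r} - {r'}) c" if "Pos c \<in> set (rbody r')" for c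
    proof -
      have "B \<in> once_val (S - {r'} - {r}) c \<or> B \<in> once_val (S - {r'}) (rhead r)"
        by (rule psubset(2)[OF smaller pos r_left B(2)[OF that]])
      moreover have "S - {r'} - {r} = S - {r} - {r'}" by blast
      ultimately show ?thesis using 3 by simp
    qed
    then have "G \<in> rule_val (once_val (S - {r} - {r'})) r'" by (rule transfer)
    then have "G \<in> once_val (S - {r}) b"
      using once_val_mem[of "S - {r}"] psubset(1) r'(1,2) 3 by blast
    then show ?thesis by blast
  qed
qed

lemma once_val_prefixed:
  assumes "finite P" "positive P"
  shows "TP P (once_val P) q \<subseteq> once_val P q"
proof
  fix G assume "G \<in> TP P (once_val P) q"
  then obtain r where r: "r \<in> P" "rhead r = q" "G \<in> rule_val (once_val P) r"
    unfolding TP_mem by blast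
  obtain B where B: "cg_le G B" "\<And>c. Pos c \<in> set (rbody r) \<Longrightarrow> B \<in> once_val P c"
    and transfer: "\<And>J. (\<And>c. Pos c \<in> set (rbody r) \<Longrightarrow> B \<in> J c) \<Longrightarrow> G \<in> rule_val J r"
    using rule_val_witness[OF assms(2) r(1,3)] by blast
  have G_graph: "is_cgraph G"
    using r(3) unfolding rule_val_def mem_cv_app by blast
  show "G \<in> once_val P q"
  proof (cases "B \<in> once_val P q")
    case True
    then show ?thesis using once_val_down_closed[OF assms(1) _ G_graph B(1)] by blast
  next
    case False
    then have "B \<in> once_val (P - {r}) c" if "Pos c \<in> set (rbody r)" for c
      using once_val_exchange[OF assms r(1) B(2)[OF that]] r(2) by blast
    then have "G \<in> rule_val (once_val (P - {r})) r" by (rule transfer)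
    then show ?thesis using once_val_mem[OF assms(1)] r(1,2) by blast
  qed
qed

lemma TP_omega_finite:
  assumes "finite P" "positive P"
  shows "TP_omega P = TP_up P (card P)"
proof (intro ext equalityI)
  fix p
  have "TP_omega P p \<subseteq> once_val P p"
    using TP_omega_least[OF assms(2) once_val_prefixed[OF assms]] unfolding ci_le_def by blast
  also have "\<dots> \<subseteq> TP_up P (card P) p"
    unfolding once_val_def by (rule once_up_below_TP_up[OF assms(2)]) simp
  finally show "TP_omega P p \<subseteq> TP_up P (card P) p" .
  show "TP_up P (card P) p \<subseteq> TP_omega P p" unfolding TP_omega_def by blast
qed

theorem theorem2:
  fixes P :: "('a, 'l) cprogram"
  assumes "positive P"
  shows "\<exists>L. is_cinterp L \<and> TP P L = L \<and>
             (\<forall>J. is_cinterp J \<longrightarrow> TP P J = J \<longrightarrow> ci_le L J) \<and>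
             causal_model P L \<and> (\<forall>J. causal_model P J \<longrightarrow> ci_le L J) \<and>
             L = TP_omega P \<and>
             (finite P \<longrightarrow> L = TP_up P (card P))"
proof (intro exI conjI allI impI)
  show cinterp: "is_cinterp (TP_omega P)"
    unfolding is_cinterp_def TP_omega_def by (auto intro!: is_cvalue_Union is_cvalue_TP_up)
  show fixpoint: "TP P (TP_omega P) = TP_omega P" by (rule TP_omega_fixpoint[OF assms])
  show "ci_le (TP_omega P) J" if "TP P J = J" for J
    by (rule TP_omega_least[OF assms]) (simp add: that)
  show "causal_model P (TP_omega P)"
    unfolding causal_model_iff_prefixed using cinterp fixpoint by simp
  show "ci_le (TP_omega P) J" if "causal_model P J" for J
    using that TP_omega_least[OF assms] unfolding causal_model_iff_prefixed by blast
  show "TP_omega P = TP_up P (card P)" if "finite P"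
    by (rule TP_omega_finite[OF that assms])
qed (rule refl)

end
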